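(* For $n\ge2$ and all $P,Q\in\Gamma_n$, $D_{Th}(P\|Q)\le 3D_{Jh}(P\|Q)$.
   Context: $\Gamma_n=\{P=(p_1,\dots,p_n): p_i>0,\ \sum p_i=1\}$. $h(P\|Q)=\frac12\sum_{i=1}^n(\sqrt{p_i}-\sqrt{q_i})^2$; $J(P\|Q)=\sum_{i=1}^n(p_i-q_i)\ln\frac{p_i}{q_i}$; $T(P\|Q)=\sum_{i=1}^n\frac{p_i+q_i}{2}\ln\frac{p_i+q_i}{2\sqrt{p_iq_i}}$. $D_{Th}=T-h$, $D_{Jh}=\frac18J-h$. *)

theory Defs
  imports Complex_Main
begin

definition Gamma :: "nat \<Rightarrow> (nat \<Rightarrow> real) set" where
  "Gamma n = {p. (\<forall>i<n. p i > 0) \<and> (\<Sum>i<n. p i) = 1}"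

definition hell :: "nat \<Rightarrow> (nat \<Rightarrow> real) \<Rightarrow> (nat \<Rightarrow> real) \<Rightarrow> real" where
  "hell n p q = (1/2) * (\<Sum>i<n. (sqrt (p i) - sqrt (q i))^2)"

definition Jdiv :: "nat \<Rightarrow> (nat \<Rightarrow> real) \<Rightarrow> (nat \<Rightarrow> real) \<Rightarrow> real" where
  "Jdiv n p q = (\<Sum>i<n. (p i - q i) * ln (p i / q i))"

definition Tdiv :: "nat \<Rightarrow> (nat \<Rightarrow> real) \<Rightarrow> (nat \<Rightarrow> real) \<Rightarrow> real" where
  "Tdiv n p q = (\<Sum>i<n. ((p i + q i) / 2) * ln ((p i + q i) / (2 * sqrt (p i * q i))))"

definition D_Th :: "nat \<Rightarrow> (nat \<Rightarrow> real) \<Rightarrow> (nat \<Rightarrow> real) \<Rightarrow> real" where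
  "D_Th n p q = Tdiv n p q - hell n p q"

definition D_Jh :: "nat \<Rightarrow> (nat \<Rightarrow> real) \<Rightarrow> (nat \<Rightarrow> real) \<Rightarrow> real" where
  "D_Jh n p q = (1/8) * Jdiv n p q - hell n p q"

end

theory Submission imports Defs begin

text \<open>Write a coordinate pair as \<open>a = t e\<^sup>x\<close>, \<open>b = t e\<^sup>-\<^sup>x\<close> with \<open>t = \<surd>(ab)\<close>.
  Then \<open>a + b = 2t cosh x\<close>, \<open>a - b = 2t sinh x\<close> and \<open>(\<surd>a - \<surd>b)\<^sup>2 = 2t (cosh x - 1)\<close>, so
  each summand of \<open>3 D\<^sub>J\<^sub>h - D\<^sub>T\<^sub>h\<close> is \<open>t\<close> times
  \<open>F x = 3/2 x sinh x - cosh x ln (cosh x) - 2 (cosh x - 1)\<close>. The function \<open>F\<close> is even,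
  vanishes at 0, and \<open>F' = cosh \<cdot> G\<close> with \<open>G x = 3/2 (x - tanh x) - tanh x ln (cosh x)\<close>;
  \<open>G\<close> also vanishes at 0, and \<open>cosh\<^sup>2 \<cdot> G' = sinh\<^sup>2/2 - ln cosh \<ge> 0\<close> because
  \<open>ln (cosh x) \<le> cosh x - 1 \<le> sinh\<^sup>2 x / 2\<close>. Hence \<open>G \<ge> 0\<close> and \<open>F \<ge> 0\<close> on \<open>x \<ge> 0\<close>.\<close>

lemma ln_cosh_le_sinh_sq_half:
  fixes x :: real
  shows "ln (cosh x) \<le> sinh x ^ 2 / 2"
proof -
  have "ln (cosh x) \<le> cosh x - 1"
    using cosh_real_ge_1[of x] by (simp add: ln_le_minus_one)
  also have "\<dots> \<le> sinh x ^ 2 / 2"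
  proof -
    have "sinh x ^ 2 / 2 - (cosh x - 1) = (cosh x - 1) ^ 2 / 2"
      using cosh_square_eq[of x] by (simp add: power2_eq_square algebra_simps)
    then show ?thesis
      using zero_le_power2[of "cosh x - 1"] by linarith
  qed
  finally show ?thesis .
qed

lemma one_minus_tanh_sq:
  fixes x :: real
  shows "1 - tanh x ^ 2 = 1 / cosh x ^ 2"
proof -
  have "1 - tanh x ^ 2 = (cosh x ^ 2 - sinh x ^ 2) / cosh x ^ 2"
    by (simp add: tanh_def power_divide field_simps)
  then show ?thesis
    by (simp add: hyperbolic_pythagoras)
qed

lemma tanh_mult_ln_cosh_le:
  fixes x :: real
  assumes "0 \<le> x"
  shows "tanh x * ln (cosh x) \<le> 3/2 * (x - tanh x)"
proof -
  define G where "G y = 3/2 * (y - tanh y) - tanh y * ln (cosh y)" for y :: real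
  have "G 0 \<le> G x"
  proof (rule DERIV_nonneg_imp_nondecreasing[OF assms])
    fix y :: real
    have "(G has_real_derivative
        3/2 * (1 - (1 - tanh y ^ 2)) - ((1 - tanh y ^ 2) * ln (cosh y) + tanh y * (sinh y / cosh y))) (at y)"
      unfolding G_def by (auto intro!: derivative_eq_intros)
    moreover have "3/2 * (1 - (1 - tanh y ^ 2)) - ((1 - tanh y ^ 2) * ln (cosh y) + tanh y * (sinh y / cosh y))
        = tanh y ^ 2 / 2 - (1 - tanh y ^ 2) * ln (cosh y)"
      by (simp add: tanh_def[symmetric] power2_eq_square algebra_simps)
    moreover have "\<dots> = (sinh y ^ 2 / 2 - ln (cosh y)) / cosh y ^ 2"
      unfolding one_minus_tanh_sq by (simp add: tanh_def power_divide diff_divide_distrib)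
    moreover have "0 \<le> (sinh y ^ 2 / 2 - ln (cosh y)) / cosh y ^ 2"
      using ln_cosh_le_sinh_sq_half[of y] by simp
    ultimately show "\<exists>d. (G has_real_derivative d) (at y) \<and> 0 \<le> d"
      by auto
  qed
  then show ?thesis
    by (simp add: G_def)
qed

lemma cosh_mult_ln_cosh_le:
  fixes x :: real
  shows "cosh x * ln (cosh x) + 2 * (cosh x - 1) \<le> 3/2 * x * sinh x"
proof -
  define F where "F y = 3/2 * y * sinh y - cosh y * ln (cosh y) - 2 * (cosh y - 1)" for y :: real
  have "F 0 \<le> F \<bar>x\<bar>"
  proof (rule DERIV_nonneg_imp_nondecreasing[of 0 "\<bar>x\<bar>"])
    fix y :: real
    assume "0 \<le> y"
    have "(F has_real_derivative 3/2 * (y * cosh y - sinh y) - sinh y * ln (cosh y)) (at y)"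
      unfolding F_def by (auto intro!: derivative_eq_intros simp: field_simps)
    moreover have "3/2 * (y * cosh y - sinh y) - sinh y * ln (cosh y)
        = cosh y * (3/2 * (y - tanh y) - tanh y * ln (cosh y))"
      by (simp add: tanh_def field_simps)
    moreover have "0 \<le> cosh y * (3/2 * (y - tanh y) - tanh y * ln (cosh y))"
      using tanh_mult_ln_cosh_le[OF \<open>0 \<le> y\<close>] by simp
    ultimately show "\<exists>d. (F has_real_derivative d) (at y) \<and> 0 \<le> d"
      by auto
  qed simp
  moreover have "F \<bar>x\<bar> = F x"
    by (simp add: F_def abs_if)
  ultimately show ?thesis
    by (simp add: F_def)
qed

lemma D_Th_summand_le_3_D_Jh_summand:
  fixes a b :: real
  assumes "0 < a" and "0 < b"
  shows "(a + b) / 2 * ln ((a + b) / (2 * sqrt (a * b))) - 1/2 * (sqrt a - sqrt b) ^ 2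
     \<le> 3 * (1/8 * ((a - b) * ln (a / b)) - 1/2 * (sqrt a - sqrt b) ^ 2)"
proof -
  define t where "t = sqrt a * sqrt b"
  define x where "x = ln (sqrt a / sqrt b)"
  have "0 < t"
    using assms by (simp add: t_def)
  have sqrt_ab: "sqrt (a * b) = t"
    by (simp add: t_def real_sqrt_mult)
  have sum_eq: "a + b = 2 * t * cosh x"
    using assms by (simp add: x_def t_def cosh_ln_real field_simps)
  have diff_eq: "a - b = 2 * t * sinh x"
    using assms by (simp add: x_def t_def sinh_ln_real field_simps)
  have ln_eq: "ln (a / b) = 2 * x"
    using assms by (simp add: x_def ln_div ln_sqrt)
  have hell_eq: "(sqrt a - sqrt b) ^ 2 = 2 * t * (cosh x - 1)"
    using assms sum_eq by (simp add: t_def power2_eq_square algebra_simps)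
  have "t * (cosh x * ln (cosh x) + 2 * (cosh x - 1)) \<le> t * (3/2 * x * sinh x)"
    using cosh_mult_ln_cosh_le[of x] \<open>0 < t\<close> by (intro mult_left_mono) auto
  then show ?thesis
    using \<open>0 < t\<close> unfolding sqrt_ab sum_eq diff_eq ln_eq hell_eq
    by (simp add: algebra_simps)
qed

lemma D_Th_le_3_D_Jh:
  assumes "\<And>i. i < n \<Longrightarrow> 0 < p i" and "\<And>i. i < n \<Longrightarrow> 0 < q i"
  shows "D_Th n p q \<le> 3 * D_Jh n p q"
proof -
  have "D_Th n p q = (\<Sum>i<n. (p i + q i) / 2 * ln ((p i + q i) / (2 * sqrt (p i * q i)))
      - 1/2 * (sqrt (p i) - sqrt (q i)) ^ 2)"
    by (simp add: D_Th_def Tdiv_def hell_def sum_subtractf sum_distrib_left)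
  also have "\<dots> \<le> (\<Sum>i<n. 3 * (1/8 * ((p i - q i) * ln (p i / q i))
      - 1/2 * (sqrt (p i) - sqrt (q i)) ^ 2))"
    using assms by (intro sum_mono D_Th_summand_le_3_D_Jh_summand) auto
  also have "\<dots> = 3 * D_Jh n p q"
    by (simp add: D_Jh_def Jdiv_def hell_def sum_subtractf sum_distrib_left)
  finally show ?thesis .
qed

theorem proposition5p8:
  fixes n :: nat and p q :: "nat \<Rightarrow> real"
  assumes "n \<ge> 2" and "p \<in> Gamma n" and "q \<in> Gamma n"
  shows "D_Th n p q \<le> 3 * D_Jh n p q"
  using assms(2,3) by (intro D_Th_le_3_D_Jh) (auto simp: Gamma_def)

end
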